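(* Let $V\subset\mathbb{R}^d$ be a finite antichain and let $g\in S_V$ be a generated point which has two minimal generating sets of different cardinalities. Then there exist three minima $x,u,v\in D_g$ and two coordinates $i\neq j$ such that $u_i<v_i=x_i=g_i$ and $v_j<u_j=x_j=g_j$.
   Context: For $x,y\in\mathbb{R}^d$, $x\le y$ (dominance order) means $x_i\le y_i$ for all $i$; $y\rhd x$ means $y_i>x_i$ for all $i$. The join $x\vee y$ is the componentwise maximum. $V\subset\mathbb{R}^d$ is a finite antichain in the dominance order; its elements are called minima. The orthogonal surface $S_V$ is the topological boundary of $\langle V\rangle=\{x: x\ge v\text{ for some }v\in V\}$; equivalently $p\in S_V$ iff there is $v\in V$ with $v\le p$ and there is no $w\in V$ with $p\rhd w$. For $p\in S_V$ let $D_p=\{v\in V: v\le p\}$. A generated point is a point $p\in S_V$ with $p=\bigvee G$ for some nonempty $G\subseteq V$ (then $G\subseteq D_p$); such a $G$ is a generating set for $p$, and it is minimal if $\bigvee(G\setminus\{v\})\neq p$ for every $v\in G$. *)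

theory Defs
  imports "HOL-Analysis.Analysis"
begin

definition dom_le :: "real ^ 'd \<Rightarrow> real ^ 'd \<Rightarrow> bool" where
  "dom_le x y \<longleftrightarrow> (\<forall>i. x $ i \<le> y $ i)"

definition dom_gt :: "real ^ 'd \<Rightarrow> real ^ 'd \<Rightarrow> bool" where
  "dom_gt y x \<longleftrightarrow> (\<forall>i. y $ i > x $ i)"

definition dom_antichain :: "(real ^ 'd) set \<Rightarrow> bool" where
  "dom_antichain V \<longleftrightarrow> (\<forall>v\<in>V. \<forall>w\<in>V. dom_le v w \<longrightarrow> v = w)"

definition join :: "(real ^ 'd) set \<Rightarrow> real ^ 'd" where
  "join G = (\<chi> i. Max ((\<lambda>v. v $ i) ` G))"

definition orth_surface :: "(real ^ 'd) set \<Rightarrow> (real ^ 'd) set" where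
  "orth_surface V = {p. (\<exists>v\<in>V. dom_le v p) \<and> \<not> (\<exists>w\<in>V. dom_gt p w)}"

definition Dset :: "(real ^ 'd) set \<Rightarrow> real ^ 'd \<Rightarrow> (real ^ 'd) set" where
  "Dset V p = {v\<in>V. dom_le v p}"

definition generating_set :: "(real ^ 'd) set \<Rightarrow> real ^ 'd \<Rightarrow> (real ^ 'd) set \<Rightarrow> bool" where
  "generating_set V p G \<longleftrightarrow> G \<noteq> {} \<and> G \<subseteq> V \<and> join G = p"

text \<open>Minimality: removing any element changes the join (the join of the empty set is
  regarded as undefined, hence different from p).\<close>
definition minimal_generating_set :: "(real ^ 'd) set \<Rightarrow> real ^ 'd \<Rightarrow> (real ^ 'd) set \<Rightarrow> bool" where
  "minimal_generating_set V p G \<longleftrightarrow> generating_set V p G \<and>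
     (\<forall>v\<in>G. G - {v} = {} \<or> join (G - {v}) \<noteq> p)"

definition generated_point :: "(real ^ 'd) set \<Rightarrow> real ^ 'd \<Rightarrow> bool" where
  "generated_point V p \<longleftrightarrow> p \<in> orth_surface V \<and> (\<exists>G. generating_set V p G)"

end

theory Submission
  imports Defs
begin

text \<open>Every element v of a minimal generating set G of g owns a private coordinate k:
  v attains g at k while all other elements of G stay strictly below g k. If G2 is larger
  than G1, map each v in G2 to an element of G1 attaining g at the private coordinate
  of v; by pigeonhole two distinct u, v share the same image x, and the private
  coordinates i of v and j of u give the required configuration.\<close>

lemma join_nth: "join G $ k = Max ((\<lambda>v. v $ k) ` G)"
  by (simp add: join_def)

lemma join_nth_ge: "finite G \<Longrightarrow> v \<in> G \<Longrightarrow> v $ k \<le> join G $ k"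
  unfolding join_nth by (rule Max_ge) auto

lemma join_nth_attained:
  assumes "finite G" "G \<noteq> {}"
  obtains x where "x \<in> G" "x $ k = join G $ k"
proof -
  have "Max ((\<lambda>v. v $ k) ` G) \<in> (\<lambda>v. v $ k) ` G"
    using assms by (intro Max_in) auto
  then show ?thesis using that unfolding join_nth by force
qed

lemma generating_set_subset_Dset:
  assumes "finite V" "generating_set V p G"
  shows "G \<subseteq> Dset V p"
  using assms join_nth_ge[of G] finite_subset[of G V]
  unfolding generating_set_def Dset_def dom_le_def by blast

lemma minimal_generating_set_private_coordinate:
  assumes "finite V" "minimal_generating_set V p G" "v \<in> G"
  obtains k where "v $ k = p $ k" "\<And>w. w \<in> G \<Longrightarrow> w \<noteq> v \<Longrightarrow> w $ k < p $ k"
proof (cases "G - {v} = {}")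
  case True
  then have "G = {v}" using assms(3) by blast
  then have "v = p"
    using assms(2) by (auto simp: minimal_generating_set_def generating_set_def vec_eq_iff join_nth)
  with \<open>G = {v}\<close> show ?thesis using that by blast
next
  case False
  have G: "finite G" "join G = p"
    using assms(1,2) finite_subset
    by (auto simp: minimal_generating_set_def generating_set_def)
  have "join (G - {v}) \<noteq> p"
    using assms(2,3) False by (auto simp: minimal_generating_set_def)
  then obtain k where k: "join (G - {v}) $ k \<noteq> p $ k"
    by (metis vec_eq_iff)
  have "finite (G - {v})" using G(1) by simp
  then obtain y where "y \<in> G - {v}" "y $ k = join (G - {v}) $ k"
    using False by (rule join_nth_attained)
  moreover have "y $ k \<le> p $ k"
    using join_nth_ge[OF G(1)] G(2) \<open>y \<in> G - {v}\<close> by blast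
  ultimately have below: "join (G - {v}) $ k < p $ k" using k by simp
  have others: "w $ k < p $ k" if "w \<in> G" "w \<noteq> v" for w
    using join_nth_ge[OF \<open>finite (G - {v})\<close>, of w k] below that by simp
  obtain z where "z \<in> G" "z $ k = join G $ k"
    using G(1) assms(3) by (auto elim: join_nth_attained)
  then have "z = v" using others G(2) by force
  with \<open>z $ k = join G $ k\<close> G(2) show ?thesis using that others by blast
qed

lemma minimal_generating_sets_card_less:
  fixes V :: "(real ^ 'd) set"
  assumes "finite V"
    and m1: "minimal_generating_set V g G1" and m2: "minimal_generating_set V g G2"
    and less: "card G1 < card G2"
  shows "\<exists>x\<in>Dset V g. \<exists>u\<in>Dset V g. \<exists>v\<in>Dset V g. \<exists>i j. i \<noteq> j \<and>
           u $ i < v $ i \<and> v $ i = x $ i \<and> x $ i = g $ i \<and>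
           v $ j < u $ j \<and> u $ j = x $ j \<and> x $ j = g $ j"
proof -
  have gen1: "generating_set V g G1" and gen2: "generating_set V g G2"
    using m1 m2 by (auto simp: minimal_generating_set_def)
  have G1: "finite G1" "G1 \<noteq> {}" "join G1 = g"
    using gen1 \<open>finite V\<close> finite_subset by (auto simp: generating_set_def)
  have "\<forall>v\<in>G2. \<exists>k. v $ k = g $ k \<and> (\<forall>w\<in>G2. w \<noteq> v \<longrightarrow> w $ k < g $ k)"
    by (metis minimal_generating_set_private_coordinate[OF \<open>finite V\<close> m2])
  then obtain key where key: "\<And>v. v \<in> G2 \<Longrightarrow> v $ key v = g $ key v"
    "\<And>v w. v \<in> G2 \<Longrightarrow> w \<in> G2 \<Longrightarrow> w \<noteq> v \<Longrightarrow> w $ key v < g $ key v"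
    by metis
  have "\<forall>k. \<exists>x. x \<in> G1 \<and> x $ k = g $ k"
    using join_nth_attained[OF G1(1,2)] G1(3) by metis
  then obtain att where att: "\<And>k. att k \<in> G1" "\<And>k. att k $ k = g $ k"
    by metis
  have "\<not> inj_on (att \<circ> key) G2"
  proof
    assume "inj_on (att \<circ> key) G2"
    then have "card G2 \<le> card G1"
      using att(1) G1(1) by (intro card_inj_on_le) auto
    with less show False by simp
  qed
  then obtain u v where uv: "u \<in> G2" "v \<in> G2" "u \<noteq> v" "att (key u) = att (key v)"
    unfolding inj_on_def by auto
  define x where "x = att (key v)"
  have "x \<in> Dset V g" "u \<in> Dset V g" "v \<in> Dset V g"
    using generating_set_subset_Dset[OF \<open>finite V\<close>] gen1 gen2 att(1) uv x_def by blast+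
  moreover have "key v \<noteq> key u"
    using key[OF uv(1)] key[OF uv(2)] uv by force
  moreover have "x $ key v = g $ key v" "x $ key u = g $ key u"
    using att(2) uv(4) x_def by metis+
  ultimately show ?thesis
    using key uv by (intro bexI[of _ x] bexI[of _ u] bexI[of _ v] exI[of _ "key v"] exI[of _ "key u"]) auto
qed

theorem lemma4p1:
  fixes V :: "(real ^ 'd) set" and g :: "real ^ 'd" and G1 G2 :: "(real ^ 'd) set"
  assumes "finite V" and "dom_antichain V"
    and "generated_point V g"
    and "minimal_generating_set V g G1" and "minimal_generating_set V g G2"
    and "card G1 \<noteq> card G2"
  shows "\<exists>x\<in>Dset V g. \<exists>u\<in>Dset V g. \<exists>v\<in>Dset V g. \<exists>i j. i \<noteq> j \<and>
           u $ i < v $ i \<and> v $ i = x $ i \<and> x $ i = g $ i \<and>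
           v $ j < u $ j \<and> u $ j = x $ j \<and> x $ j = g $ j"
proof (cases "card G1 < card G2")
  case True
  then show ?thesis using minimal_generating_sets_card_less[OF assms(1,4,5)] by blast
next
  case False
  then have "card G2 < card G1" using assms(6) by linarith
  then show ?thesis using minimal_generating_sets_card_less[OF assms(1,5,4)] by blast
qed

end
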